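(* Let $(X,d)$ be a geodesic metric space with basepoint $x_0$, and let $(T_X,d^* )$ be its end-approximating tree. Let $x,y\in X$ and $r\in[0,\infty)$. Then $x$ and $y$ lie in the same path component of $X\setminus B(x_0,r)$ if and only if $([x],[y])^*_{[x_0]}>r$.
   Context: $B(x_0,r)$ is the closed ball. With $(x,y)_{x_0}=\frac12(d(x_0,x)+d(x_0,y)-d(x,y))$, let $(x,y)'_{x_0}=\sup\min_{1\leqslant i\leqslant n-1}(x_i,x_{i+1})_{x_0}$, the supremum over all finite sequences $x=x_1,\ldots,x_n=y$ in $X$, and $d'(x,y)=d(x_0,x)+d(x_0,y)-2(x,y)'_{x_0}$. The end-approximating tree is $T_X=X/\sim$, $x\sim y$ iff $d'(x,y)=0$, with metric $d^*([x],[y])=d'(x,y)$, and $([x],[y])^*_{[x_0]}=\frac12(d^*([x_0],[x])+d^*([x_0],[y])-d^*([x],[y]))$ is the Gromov product in $T_X$ (it equals $(x,y)'_{x_0}$). *)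

theory Defs
  imports "HOL-Analysis.Analysis"
begin

definition geodesic_space :: "'a::metric_space itself \<Rightarrow> bool" where
  "geodesic_space _ \<longleftrightarrow>
     (\<forall>x y::'a. \<exists>\<gamma>::real \<Rightarrow> 'a. \<gamma> 0 = x \<and> \<gamma> (dist x y) = y \<and>
        (\<forall>s\<in>{0..dist x y}. \<forall>t\<in>{0..dist x y}. dist (\<gamma> s) (\<gamma> t) = \<bar>s - t\<bar>))"

definition gromov_prod :: "'a::metric_space \<Rightarrow> 'a \<Rightarrow> 'a \<Rightarrow> real" where
  "gromov_prod x0 x y = (dist x0 x + dist x0 y - dist x y) / 2"

definition chain_min :: "'a::metric_space \<Rightarrow> 'a list \<Rightarrow> real" where
  "chain_min x0 xs = Min {gromov_prod x0 (xs ! i) (xs ! Suc i) | i. Suc i < length xs}"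

definition gromov_prod' :: "'a::metric_space \<Rightarrow> 'a \<Rightarrow> 'a \<Rightarrow> real" where
  "gromov_prod' x0 x y =
     Sup {chain_min x0 xs | xs. 2 \<le> length xs \<and> hd xs = x \<and> last xs = y}"

definition dist' :: "'a::metric_space \<Rightarrow> 'a \<Rightarrow> 'a \<Rightarrow> real" where
  "dist' x0 x y = dist x0 x + dist x0 y - 2 * gromov_prod' x0 x y"

definition tclass :: "'a::metric_space \<Rightarrow> 'a \<Rightarrow> 'a set" where
  "tclass x0 x = {z. dist' x0 x z = 0}"

definition end_tree :: "'a::metric_space \<Rightarrow> 'a set set" where
  "end_tree x0 = range (tclass x0)"

definition dstar :: "'a::metric_space \<Rightarrow> 'a set \<Rightarrow> 'a set \<Rightarrow> real" where
  "dstar x0 A B = dist' x0 (SOME a. a \<in> A) (SOME b. b \<in> B)"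

definition gromov_prod_star :: "'a::metric_space \<Rightarrow> 'a set \<Rightarrow> 'a set \<Rightarrow> real" where
  "gromov_prod_star x0 A B =
     (dstar x0 (tclass x0 x0) A + dstar x0 (tclass x0 x0) B - dstar x0 A B) / 2"

end

theory Submission
  imports Defs
begin

text \<open>The inequality (x,y)'_x0 > r holds exactly when some chain x = x_1, ..., x_n = y has all
  consecutive Gromov products (x_i, x_(i+1))_x0 > r. A path avoiding B(x0,r) stays at distance at
  least some m > r from x0, and sampling it with steps shorter than m - r yields such a chain, since
  (a,b)_x0 \<ge> min(d(x0,a), d(x0,b)) - d(a,b). Conversely, every point z of a geodesic from a to b
  satisfies d(x0,z) \<ge> (a,b)_x0, so geodesics between consecutive chain points avoid B(x0,r).
  Finally ([x],[y])*_[x0] = (x,y)'_x0, because the ultrametric inequality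
  min((x,y)'_x0, (y,z)'_x0) \<le> (x,z)'_x0 makes d' constant on equivalence classes.\<close>

lemma successively_append_ConsI:
  "successively P (xs @ [y]) \<Longrightarrow> successively P (y # ys) \<Longrightarrow> successively P (xs @ y # ys)"
  by (simp add: successively_append_iff)

lemma successively_transpD:
  assumes "transp R" and "successively R (x # zs @ [y])"
  shows "R x y"
  using assms(2)
proof (induction zs arbitrary: x)
  case (Cons z zs)
  then have "R x z" and "R z y"
    by simp_all
  with assms(1) show ?case
    by (rule transpD)
qed simp

lemma length_ge_2_hd_last_iff:
  "2 \<le> length xs \<and> hd xs = x \<and> last xs = y \<longleftrightarrow> (\<exists>zs. xs = x # zs @ [y])"
proof
  assume "2 \<le> length xs \<and> hd xs = x \<and> last xs = y"
  then obtain ys where xs: "xs = x # ys" and "ys \<noteq> []" and "last ys = y"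
    by (cases xs; cases "tl xs") auto
  then have "xs = x # butlast ys @ [y]"
    by (metis append_butlast_last_id)
  then show "\<exists>zs. xs = x # zs @ [y]" ..
qed auto

lemma gromov_prod_commute: "gromov_prod x0 x y = gromov_prod x0 y x"
  unfolding gromov_prod_def by (simp add: dist_commute)

lemma gromov_prod_le_left: "gromov_prod x0 x y \<le> dist x0 x"
  unfolding gromov_prod_def using dist_triangle[of x0 y x] by (simp add: dist_commute)

lemma gromov_prod_self: "gromov_prod x0 x x = dist x0 x"
  unfolding gromov_prod_def by simp

lemma gromov_prod_base: "gromov_prod x0 x0 y = 0"
  unfolding gromov_prod_def by simp

lemma gromov_prod_ge_min_dist: "min (dist x0 x) (dist x0 y) - dist x y \<le> gromov_prod x0 x y"
  using min.cobounded1[of "dist x0 x" "dist x0 y"] min.cobounded2[of "dist x0 x" "dist x0 y"]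
    zero_le_dist[of x y]
  unfolding gromov_prod_def by argo

lemma gromov_prod_le_dist_between:
  assumes "dist x z + dist z y = dist x y"
  shows "gromov_prod x0 x y \<le> dist x0 z"
  using assms dist_triangle[of x0 x z] dist_triangle[of x0 y z]
  unfolding gromov_prod_def by (simp add: dist_commute)

lemma chain_min_conv_image:
  "chain_min x0 xs = Min ((\<lambda>i. gromov_prod x0 (xs ! i) (xs ! Suc i)) ` {..<length xs - 1})"
  unfolding chain_min_def by (rule arg_cong[where f = Min]) auto

lemma less_chain_min_iff:
  assumes "2 \<le> length xs"
  shows "r < chain_min x0 xs \<longleftrightarrow> successively (\<lambda>a b. r < gromov_prod x0 a b) xs"
proof -
  have "{..<length xs - 1} \<noteq> {}"
    using assms by (simp add: lessThan_empty_iff)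
  then show ?thesis
    unfolding chain_min_conv_image successively_conv_nth by (auto simp: Min_gr_iff)
qed

lemma chain_min_le_hd:
  assumes "2 \<le> length xs"
  shows "chain_min x0 xs \<le> dist x0 (hd xs)"
proof -
  obtain a b ys where xs: "xs = a # b # ys"
    using assms by (metis Suc_le_length_iff numeral_2_eq_2)
  have "chain_min x0 xs \<le> gromov_prod x0 a b"
    unfolding chain_min_conv_image xs by (rule Min_le) force+
  also have "\<dots> \<le> dist x0 (hd xs)"
    unfolding xs by (simp add: gromov_prod_le_left)
  finally show ?thesis .
qed

lemma less_gromov_prod'_iff:
  "r < gromov_prod' x0 x y \<longleftrightarrow> (\<exists>zs. successively (\<lambda>a b. r < gromov_prod x0 a b) (x # zs @ [y]))"
proof -
  define C where "C = {chain_min x0 xs | xs. 2 \<le> length xs \<and> hd xs = x \<and> last xs = y}"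
  have "chain_min x0 [x, y] \<in> C"
    unfolding C_def by force
  moreover have "bdd_above C"
    unfolding C_def using chain_min_le_hd by (intro bdd_aboveI[of _ "dist x0 x"]) auto
  ultimately have "r < gromov_prod' x0 x y \<longleftrightarrow> (\<exists>c\<in>C. r < c)"
    unfolding gromov_prod'_def C_def[symmetric] by (intro less_cSup_iff) auto
  also have "\<dots> \<longleftrightarrow> (\<exists>xs. (2 \<le> length xs \<and> hd xs = x \<and> last xs = y) \<and>
      successively (\<lambda>a b. r < gromov_prod x0 a b) xs)"
    unfolding C_def using less_chain_min_iff by blast
  finally show ?thesis
    unfolding length_ge_2_hd_last_iff by blast
qed

lemma gromov_prod_le_gromov_prod': "gromov_prod x0 x y \<le> gromov_prod' x0 x y"
proof (rule dense_le)
  fix r assume "r < gromov_prod x0 x y"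
  then have "successively (\<lambda>a b. r < gromov_prod x0 a b) (x # [] @ [y])"
    by simp
  then show "r \<le> gromov_prod' x0 x y"
    using less_gromov_prod'_iff less_imp_le by blast
qed

lemma gromov_prod'_le_left: "gromov_prod' x0 x y \<le> dist x0 x"
proof (rule dense_le)
  fix r assume "r < gromov_prod' x0 x y"
  then obtain zs where "successively (\<lambda>a b. r < gromov_prod x0 a b) (x # zs @ [y])"
    unfolding less_gromov_prod'_iff ..
  then have "r < gromov_prod x0 x (hd (zs @ [y]))"
    by (simp add: successively_Cons)
  then show "r \<le> dist x0 x"
    using gromov_prod_le_left[of x0 x] by (meson less_imp_le order.trans)
qed

lemma gromov_prod'_commute: "gromov_prod' x0 x y = gromov_prod' x0 y x"
proof -
  have "r < gromov_prod' x0 y x" if "r < gromov_prod' x0 x y" for x y :: 'a and r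
  proof -
    from that obtain zs where "successively (\<lambda>a b. r < gromov_prod x0 a b) (x # zs @ [y])"
      unfolding less_gromov_prod'_iff ..
    then have "successively (\<lambda>a b. r < gromov_prod x0 b a) (y # rev zs @ [x])"
      using successively_rev[of _ "x # zs @ [y]"] by simp
    then have "successively (\<lambda>a b. r < gromov_prod x0 a b) (y # rev zs @ [x])"
      by (rule successively_mono) (simp add: gromov_prod_commute)
    then show ?thesis
      unfolding less_gromov_prod'_iff ..
  qed
  then have "gromov_prod' x0 x y \<le> gromov_prod' x0 y x" for x y :: 'a
    by (meson dense_le less_imp_le)
  then show ?thesis
    by (simp add: order.antisym)
qed

lemma gromov_prod'_le_right: "gromov_prod' x0 x y \<le> dist x0 y"
  unfolding gromov_prod'_commute[of x0 x y] by (rule gromov_prod'_le_left)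

lemma min_gromov_prod'_le: "min (gromov_prod' x0 x y) (gromov_prod' x0 y z) \<le> gromov_prod' x0 x z"
proof (rule dense_le)
  fix r
  let ?P = "\<lambda>a b. r < gromov_prod x0 a b"
  assume "r < min (gromov_prod' x0 x y) (gromov_prod' x0 y z)"
  then obtain zs ws where "successively ?P ((x # zs) @ [y])" and "successively ?P (y # ws @ [z])"
    unfolding min_less_iff_conj less_gromov_prod'_iff by auto
  then have "successively ?P ((x # zs) @ y # ws @ [z])"
    by (rule successively_append_ConsI)
  then have "r < gromov_prod' x0 x z"
    unfolding less_gromov_prod'_iff by (intro exI[of _ "zs @ y # ws"]) simp
  then show "r \<le> gromov_prod' x0 x z"
    by simp
qed

lemma gromov_prod'_self: "gromov_prod' x0 x x = dist x0 x"
  using gromov_prod_le_gromov_prod'[of x0 x x] gromov_prod'_le_left[of x0 x x]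
  by (simp add: gromov_prod_self)

lemma gromov_prod'_base: "gromov_prod' x0 x0 y = 0"
  using gromov_prod_le_gromov_prod'[of x0 x0 y] gromov_prod'_le_left[of x0 x0 y]
  by (simp add: gromov_prod_base)

lemma dist'_commute: "dist' x0 x y = dist' x0 y x"
  unfolding dist'_def gromov_prod'_commute[of x0 x y] by simp

lemma dist'_base: "dist' x0 x0 x = dist x0 x"
  unfolding dist'_def gromov_prod'_base by simp

lemma dist'_eq_if_dist'_0:
  assumes "dist' x0 x a = 0"
  shows "dist' x0 a y = dist' x0 x y"
proof -
  have "gromov_prod' x0 x a \<le> dist x0 x" "gromov_prod' x0 x a \<le> dist x0 a"
    by (rule gromov_prod'_le_left gromov_prod'_le_right)+
  with assms have da: "dist x0 a = dist x0 x" and xa: "gromov_prod' x0 x a = dist x0 x"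
    unfolding dist'_def by linarith+
  have "min (gromov_prod' x0 a x) (gromov_prod' x0 x y) \<le> gromov_prod' x0 a y"
    "min (gromov_prod' x0 x a) (gromov_prod' x0 a y) \<le> gromov_prod' x0 x y"
    by (rule min_gromov_prod'_le)+
  moreover have "gromov_prod' x0 x y \<le> dist x0 x" "gromov_prod' x0 a y \<le> dist x0 a"
    by (rule gromov_prod'_le_left)+
  ultimately have "gromov_prod' x0 a y = gromov_prod' x0 x y"
    using da xa gromov_prod'_commute[of x0 a x] by (simp add: min.absorb2)
  then show ?thesis
    unfolding dist'_def da by simp
qed

lemma dist'_tclass_some: "dist' x0 x (SOME a. a \<in> tclass x0 x) = 0"
proof -
  have "x \<in> tclass x0 x"
    unfolding tclass_def dist'_def by (simp add: gromov_prod'_self)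
  then have "(SOME a. a \<in> tclass x0 x) \<in> tclass x0 x"
    by (rule someI)
  then show ?thesis
    unfolding tclass_def by simp
qed

lemma dstar_tclass: "dstar x0 (tclass x0 x) (tclass x0 y) = dist' x0 x y"
  unfolding dstar_def
  using dist'_eq_if_dist'_0[OF dist'_tclass_some] dist'_commute by metis

lemma gromov_prod_star_tclass:
  "gromov_prod_star x0 (tclass x0 x) (tclass x0 y) = gromov_prod' x0 x y"
  unfolding gromov_prod_star_def dstar_tclass dist'_base by (simp add: dist'_def)

lemma geodesic_path:
  fixes x y :: "'a::metric_space"
  assumes "geodesic_space TYPE('a)"
  obtains g where "path g" "pathstart g = x" "pathfinish g = y"
    "\<And>z. z \<in> path_image g \<Longrightarrow> dist x z + dist z y = dist x y"
proof -
  define D where "D = dist x y"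
  obtain \<gamma> :: "real \<Rightarrow> 'a" where "\<gamma> 0 = x" "\<gamma> D = y"
    and iso: "\<And>s t. s \<in> {0..D} \<Longrightarrow> t \<in> {0..D} \<Longrightarrow> dist (\<gamma> s) (\<gamma> t) = \<bar>s - t\<bar>"
    using assms unfolding geodesic_space_def D_def by blast
  define g where "g t = \<gamma> (t * D)" for t
  have "0 \<le> D"
    unfolding D_def by simp
  then have scaled: "t * D \<in> {0..D}" if "t \<in> {0..1}" for t
    using that mult_left_le_one_le[of D t] by auto
  have "D-lipschitz_on {0..1} g"
  proof (rule lipschitz_onI)
    fix s t :: real
    assume "s \<in> {0..1}" "t \<in> {0..1}"
    then have "dist (g s) (g t) = \<bar>s * D - t * D\<bar>"
      unfolding g_def by (intro iso scaled)
    also have "\<dots> = D * dist s t"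
      using \<open>0 \<le> D\<close> by (simp add: dist_real_def abs_mult left_diff_distrib[symmetric])
    finally show "dist (g s) (g t) \<le> D * dist s t"
      by simp
  qed (fact \<open>0 \<le> D\<close>)
  then have "path g"
    unfolding path_def by (rule lipschitz_on_continuous_on)
  moreover have "dist x z + dist z y = dist x y" if z_in: "z \<in> path_image g" for z
  proof -
    obtain t where t: "t \<in> {0..1}" and "z = g t"
      using z_in unfolding path_image_def by auto
    have z: "z = \<gamma> (t * D)"
      using \<open>z = g t\<close> unfolding g_def .
    have "dist x z = t * D" "dist z y = D - t * D"
      using iso[of 0 "t * D"] iso[of "t * D" D] scaled[OF t] \<open>0 \<le> D\<close>
      unfolding z \<open>\<gamma> 0 = x\<close>[symmetric] \<open>\<gamma> D = y\<close>[symmetric] by auto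
    then show ?thesis
      unfolding D_def by simp
  qed
  moreover have "pathstart g = x" "pathfinish g = y"
    unfolding pathstart_def pathfinish_def g_def using \<open>\<gamma> 0 = x\<close> \<open>\<gamma> D = y\<close> by auto
  ultimately show ?thesis
    using that by blast
qed

lemma path_component_if_less_gromov_prod:
  fixes x0 x y :: "'a::metric_space"
  assumes "geodesic_space TYPE('a)" and "r < gromov_prod x0 x y"
  shows "path_component (- cball x0 r) x y"
proof -
  obtain g where "path g" "pathstart g = x" "pathfinish g = y"
    and between: "\<And>z. z \<in> path_image g \<Longrightarrow> dist x z + dist z y = dist x y"
    using geodesic_path[OF assms(1)] by blast
  moreover have "path_image g \<subseteq> - cball x0 r"
  proof
    fix z
    assume "z \<in> path_image g"
    then have "gromov_prod x0 x y \<le> dist x0 z"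
      by (rule gromov_prod_le_dist_between[OF between])
    with assms(2) show "z \<in> - cball x0 r"
      by simp
  qed
  ultimately show ?thesis
    unfolding path_component_def by blast
qed

lemma path_component_if_less_gromov_prod':
  fixes x0 x y :: "'a::metric_space"
  assumes "geodesic_space TYPE('a)" and "r < gromov_prod' x0 x y"
  shows "path_component (- cball x0 r) x y"
proof -
  obtain zs where chain: "successively (\<lambda>a b. r < gromov_prod x0 a b) (x # zs @ [y])"
    using assms(2) unfolding less_gromov_prod'_iff ..
  have "transp (path_component (- cball x0 r))"
    by (rule transpI) (rule path_component_trans)
  moreover have "successively (path_component (- cball x0 r)) (x # zs @ [y])"
    using chain by (rule successively_mono) (rule path_component_if_less_gromov_prod[OF assms(1)])
  ultimately show ?thesis
    by (rule successively_transpD)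
qed

lemma path_chain_with_small_steps:
  assumes "path g" and "0 < e"
  obtains zs where "set zs \<subseteq> path_image g"
    and "successively (\<lambda>a b. dist a b < e) (pathstart g # zs @ [pathfinish g])"
proof -
  have "uniformly_continuous_on {0..1} g"
    using assms(1) unfolding path_def by (intro compact_uniformly_continuous) auto
  then obtain \<delta> where "0 < \<delta>"
    and \<delta>: "\<And>s t. s \<in> {0..1} \<Longrightarrow> t \<in> {0..1} \<Longrightarrow> dist t s < \<delta> \<Longrightarrow> dist (g t) (g s) < e"
    using assms(2) unfolding uniformly_continuous_on_def by metis
  obtain N :: nat where "N \<noteq> 0" and "inverse (real N) < \<delta>"
    using real_arch_inverse \<open>0 < \<delta>\<close> by blast
  define p where "p k = g (real k / real N)" for k
  have "dist (p i) (p (Suc i)) < e" if "i < N" for i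
  proof -
    have "real i / real N \<in> {0..1}" "real (Suc i) / real N \<in> {0..1}"
      using that by (auto simp: divide_simps)
    moreover have "dist (real (Suc i) / real N) (real i / real N) = inverse (real N)"
      using \<open>N \<noteq> 0\<close> by (simp add: dist_real_def divide_simps)
    ultimately show ?thesis
      unfolding p_def using \<delta> \<open>inverse (real N) < \<delta>\<close> by (simp add: dist_commute)
  qed
  then have "successively (\<lambda>a b. dist a b < e) (map p [0..<Suc N])"
    unfolding successively_map successively_conv_nth by (simp del: upt_Suc)
  moreover have "map p [0..<Suc N] = pathstart g # map p [1..<N] @ [pathfinish g]"
    using \<open>N \<noteq> 0\<close> by (simp add: upt_conv_Cons p_def pathstart_def pathfinish_def)
  moreover have "set (map p [1..<N]) \<subseteq> path_image g"
    unfolding path_image_def p_def by auto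
  ultimately show ?thesis
    using that[of "map p [1..<N]"] by simp
qed

lemma less_gromov_prod'_if_path_component:
  fixes x0 x y :: "'a::metric_space"
  assumes "path_component (- cball x0 r) x y"
  shows "r < gromov_prod' x0 x y"
proof -
  obtain g where "path g" "path_image g \<subseteq> - cball x0 r" "pathstart g = x" "pathfinish g = y"
    using assms unfolding path_component_def by blast
  obtain p where "p \<in> path_image g" and nearest: "\<And>z. z \<in> path_image g \<Longrightarrow> dist x0 p \<le> dist x0 z"
  proof -
    have "continuous_on (path_image g) (\<lambda>z. dist x0 z)"
      by (intro continuous_intros)
    then show ?thesis
      using continuous_attains_inf[OF compact_path_image[OF \<open>path g\<close>] path_image_nonempty] that
      by blast
  qed
  then have "r < dist x0 p"
    using \<open>path_image g \<subseteq> - cball x0 r\<close> by auto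
  then obtain zs where zs: "set zs \<subseteq> path_image g"
    and close: "successively (\<lambda>a b. dist a b < dist x0 p - r) (x # zs @ [y])"
    using path_chain_with_small_steps[OF \<open>path g\<close>, of "dist x0 p - r"] \<open>pathstart g = x\<close> \<open>pathfinish g = y\<close>
    by auto
  from close have "successively (\<lambda>a b. r < gromov_prod x0 a b) (x # zs @ [y])"
  proof (rule successively_mono)
    fix a b
    assume "a \<in> set (x # zs @ [y])" "b \<in> set (x # zs @ [y])" "dist a b < dist x0 p - r"
    moreover have "x \<in> path_image g" "y \<in> path_image g"
      using \<open>pathstart g = x\<close> \<open>pathfinish g = y\<close> by auto
    ultimately have "a \<in> path_image g" "b \<in> path_image g"
      using zs by auto
    then have "dist x0 p \<le> min (dist x0 a) (dist x0 b)"
      using nearest by simp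
    then show "r < gromov_prod x0 a b"
      using gromov_prod_ge_min_dist[of x0 a b] \<open>dist a b < dist x0 p - r\<close> by linarith
  qed
  then show ?thesis
    unfolding less_gromov_prod'_iff ..
qed

theorem lemma6p3:
  fixes x0 x y :: "'a::metric_space" and r :: real
  assumes "geodesic_space TYPE('a)"
    and "0 \<le> r"
  shows "path_component (- cball x0 r) x y \<longleftrightarrow>
         gromov_prod_star x0 (tclass x0 x) (tclass x0 y) > r"
proof -
  have "path_component (- cball x0 r) x y \<longleftrightarrow> r < gromov_prod' x0 x y"
    using less_gromov_prod'_if_path_component path_component_if_less_gromov_prod'[OF assms(1)]
    by blast
  then show ?thesis
    by (simp add: gromov_prod_star_tclass)
qed

end
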